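(* Let $(X,\mathcal{O}(X))$ be a measurable space, $\mathcal{A}$ a unital $C^*$-algebra and $\mathcal{H}$ a Hilbert space. Let $\pi:\mathcal{A}\to\mathcal{B}(\mathcal{H})$ be a unital $*$-homomorphism and $E:\mathcal{O}(X)\to\mathcal{B}(\mathcal{H})$ a spectral measure with $E(A)\pi(a)=\pi(a)E(A)$ for all $A,a$, and let $\pi E$ be the spectral instrument $\pi E(A,a)=\pi(a)E(A)$. Then the following are equivalent: (i) $\pi E$ is irreducible; (ii) $\pi$ is an irreducible representation of $\mathcal{A}$. Furthermore, in this case $E(\mathcal{O}(X))\subseteq\{0,I_\mathcal{H}\}$.
   Context: The spectral instrument $\pi E$ is called irreducible if it has no proper invariant subspace, equivalently $\{\pi(a)E(A):a\in\mathcal{A},A\in\mathcal{O}(X)\}'=\mathbb{C}I_\mathcal{H}$. A spectral measure is a projection-valued measure. *)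

theory Defs
  imports "HOL-Analysis.Analysis"
begin

class complex_vector = real_vector +
  fixes scaleC :: "complex \<Rightarrow> 'a \<Rightarrow> 'a"  (infixr \<open>*\<^sub>C\<close> 75)
  assumes scaleC_add_right: "a *\<^sub>C (x + y) = a *\<^sub>C x + a *\<^sub>C y"
    and scaleC_add_left: "(a + b) *\<^sub>C x = a *\<^sub>C x + b *\<^sub>C x"
    and scaleC_scaleC: "a *\<^sub>C (b *\<^sub>C x) = (a * b) *\<^sub>C x"
    and scaleC_one: "1 *\<^sub>C x = x"
    and scaleR_scaleC: "scaleR r x = complex_of_real r *\<^sub>C x"

class complex_normed_vector = complex_vector + real_normed_vector +
  assumes norm_scaleC: "norm (a *\<^sub>C x) = cmod a * norm x"

text \<open>Complex inner product, linear in the second and conjugate-linear in the first argument.\<close>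
class complex_inner = complex_normed_vector +
  fixes cinner :: "'a \<Rightarrow> 'a \<Rightarrow> complex"
  assumes cinner_conj: "cinner x y = cnj (cinner y x)"
    and cinner_add_right: "cinner x (y + z) = cinner x y + cinner x z"
    and cinner_scaleC_right: "cinner x (a *\<^sub>C y) = a * cinner x y"
    and cinner_self_norm: "cinner x x = complex_of_real ((norm x)\<^sup>2)"

class chilbert = complex_inner + complete_space

class cstar_algebra_1 = complex_normed_vector + real_normed_algebra_1 + complete_space +
  fixes cstar :: "'a \<Rightarrow> 'a"
  assumes scaleC_mult_left: "(a *\<^sub>C x) * y = a *\<^sub>C (x * y)"
    and scaleC_mult_right: "x * (a *\<^sub>C y) = a *\<^sub>C (x * y)"
    and cstar_cstar: "cstar (cstar x) = x"
    and cstar_add: "cstar (x + y) = cstar x + cstar y"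
    and cstar_scaleC: "cstar (a *\<^sub>C x) = cnj a *\<^sub>C cstar x"
    and cstar_mult: "cstar (x * y) = cstar y * cstar x"
    and cstar_identity: "norm (cstar x * x) = (norm x)\<^sup>2"

definition bounded_clinear :: "('h::complex_normed_vector \<Rightarrow> 'k::complex_normed_vector) \<Rightarrow> bool" where
  "bounded_clinear T \<longleftrightarrow> bounded_linear T \<and> (\<forall>c x. T (c *\<^sub>C x) = c *\<^sub>C T x)"

definition is_adjoint :: "('h::complex_inner \<Rightarrow> 'h) \<Rightarrow> ('h \<Rightarrow> 'h) \<Rightarrow> bool" where
  "is_adjoint T S \<longleftrightarrow> (\<forall>x y. cinner (T x) y = cinner x (S y))"

definition is_projection :: "('h::complex_inner \<Rightarrow> 'h) \<Rightarrow> bool" where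
  "is_projection P \<longleftrightarrow> bounded_clinear P \<and> P \<circ> P = P \<and> is_adjoint P P"

definition unital_star_hom :: "('a::cstar_algebra_1 \<Rightarrow> ('h::chilbert \<Rightarrow> 'h)) \<Rightarrow> bool" where
  "unital_star_hom \<pi> \<longleftrightarrow>
     (\<forall>a. bounded_clinear (\<pi> a)) \<and>
     (\<forall>a b x. \<pi> (a + b) x = \<pi> a x + \<pi> b x) \<and>
     (\<forall>c a x. \<pi> (c *\<^sub>C a) x = c *\<^sub>C \<pi> a x) \<and>
     (\<forall>a b. \<pi> (a * b) = \<pi> a \<circ> \<pi> b) \<and>
     \<pi> 1 = id \<and>
     (\<forall>a. is_adjoint (\<pi> a) (\<pi> (cstar a)))"

definition spectral_measure :: "'x measure \<Rightarrow> ('x set \<Rightarrow> ('h::chilbert \<Rightarrow> 'h)) \<Rightarrow> bool" where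
  "spectral_measure M E \<longleftrightarrow>
     (\<forall>A\<in>sets M. is_projection (E A)) \<and>
     E (space M) = id \<and>
     (\<forall>A\<in>sets M. \<forall>B\<in>sets M. E (A \<inter> B) = E A \<circ> E B) \<and>
     (\<forall>F. range F \<subseteq> sets M \<longrightarrow> disjoint_family F \<longrightarrow>
        (\<forall>x. (\<lambda>n. \<Sum>i<n. E (F i) x) \<longlonglongrightarrow> E (\<Union>i. F i) x))"

definition spectral_instrument :: "('a \<Rightarrow> ('h \<Rightarrow> 'h)) \<Rightarrow> ('x set \<Rightarrow> ('h \<Rightarrow> 'h)) \<Rightarrow> 'x set \<Rightarrow> 'a \<Rightarrow> ('h \<Rightarrow> 'h)" where
  "spectral_instrument \<pi> E A a = \<pi> a \<circ> E A"

definition csubspace :: "'h::complex_vector set \<Rightarrow> bool" where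
  "csubspace K \<longleftrightarrow> 0 \<in> K \<and> (\<forall>x\<in>K. \<forall>y\<in>K. x + y \<in> K) \<and> (\<forall>c. \<forall>x\<in>K. c *\<^sub>C x \<in> K)"

definition invariant_subspace :: "('h::complex_normed_vector \<Rightarrow> 'h) set \<Rightarrow> 'h set \<Rightarrow> bool" where
  "invariant_subspace S K \<longleftrightarrow> csubspace K \<and> closed K \<and> (\<forall>T\<in>S. T ` K \<subseteq> K)"

definition irreducible_family :: "('h::complex_normed_vector \<Rightarrow> 'h) set \<Rightarrow> bool" where
  "irreducible_family S \<longleftrightarrow> (\<forall>K. invariant_subspace S K \<longrightarrow> K = {0} \<or> K = UNIV)"

definition irreducible_representation :: "('a \<Rightarrow> ('h::complex_normed_vector \<Rightarrow> 'h)) \<Rightarrow> bool" where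
  "irreducible_representation \<pi> \<longleftrightarrow> irreducible_family (range \<pi>)"

definition irreducible_instrument ::
    "'x measure \<Rightarrow> ('x set \<Rightarrow> 'a \<Rightarrow> ('h::complex_normed_vector \<Rightarrow> 'h)) \<Rightarrow> bool" where
  "irreducible_instrument M I \<longleftrightarrow> irreducible_family {I A a | A a. A \<in> sets M}"

end

theory Submission
  imports Defs
begin

text \<open>Since \<open>E(X) = I\<close>, every \<open>\<pi>(a)\<close> belongs to the instrument, so an irreducible \<open>\<pi>\<close> makes
  \<open>\<pi>E\<close> irreducible. Conversely, each \<open>E(A)\<close> is a projection commuting with every \<open>\<pi>(a)E(B)\<close>,
  so its range, the fixed-point space of \<open>E(A)\<close>, is a closed invariant subspace of \<open>\<pi>E\<close>;
  irreducibility forces \<open>E(A) \<in> {0, I}\<close>. Then \<open>\<pi>E\<close> consists only of operators \<open>\<pi>(a)\<close>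
  and \<open>0\<close>, and the zero operator leaves every subspace invariant, so \<open>\<pi>\<close> and \<open>\<pi>E\<close> have
  the same invariant subspaces.\<close>

lemma invariant_subspace_subset:
  "S \<subseteq> T \<Longrightarrow> invariant_subspace T K \<Longrightarrow> invariant_subspace S K"
  unfolding invariant_subspace_def by blast

lemma irreducible_family_mono:
  "S \<subseteq> T \<Longrightarrow> irreducible_family S \<Longrightarrow> irreducible_family T"
  unfolding irreducible_family_def using invariant_subspace_subset by blast

lemma invariant_subspace_insert_zero:
  "invariant_subspace (insert (\<lambda>x. 0) S) K \<longleftrightarrow> invariant_subspace S K"
  unfolding invariant_subspace_def csubspace_def by auto

lemma irreducible_family_insert_zero:
  "irreducible_family (insert (\<lambda>x. 0) S) \<longleftrightarrow> irreducible_family S"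
  unfolding irreducible_family_def invariant_subspace_insert_zero ..

lemma closed_fixed_points:
  fixes T :: "'h::real_normed_vector \<Rightarrow> 'h"
  assumes "bounded_linear T"
  shows "closed {x. T x = x}"
  using closed_Collect_eq[OF linear_continuous_on[OF assms] continuous_on_id] .

lemma invariant_subspace_fixed_points:
  assumes P: "bounded_clinear P"
    and commute: "\<forall>T\<in>S. P \<circ> T = T \<circ> P"
  shows "invariant_subspace S {x. P x = x}"
  unfolding invariant_subspace_def
proof (intro conjI ballI)
  have "linear P" and "\<And>c x. P (c *\<^sub>C x) = c *\<^sub>C P x"
    using P bounded_linear.linear unfolding bounded_clinear_def by blast+
  then show "csubspace {x. P x = x}"
    unfolding csubspace_def by (simp add: linear_0 linear_add)
  show "closed {x. P x = x}"
    using P closed_fixed_points unfolding bounded_clinear_def by blast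
  fix T assume "T \<in> S"
  then have "P (T x) = T (P x)" for x
    using commute by (metis comp_apply)
  then show "T ` {x. P x = x} \<subseteq> {x. P x = x}"
    by auto
qed

lemma irreducible_family_commuting_projection:
  assumes irred: "irreducible_family S"
    and P: "is_projection P"
    and commute: "\<forall>T\<in>S. P \<circ> T = T \<circ> P"
  shows "P = (\<lambda>x. 0) \<or> P = id"
proof -
  have "invariant_subspace S {x. P x = x}"
    using P commute invariant_subspace_fixed_points unfolding is_projection_def by blast
  then consider "{x. P x = x} = {0}" | "{x. P x = x} = UNIV"
    using irred unfolding irreducible_family_def by blast
  then show ?thesis
  proof cases
    case 1
    have "P (P x) = P x" for x
      using P unfolding is_projection_def by (metis comp_apply)
    with 1 have "P x = 0" for x
      by blast
    then show ?thesis
      by auto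
  next
    case 2
    then have "P = id"
      by (auto simp: fun_eq_iff)
    then show ?thesis ..
  qed
qed

lemma spectral_measure_commute:
  assumes "spectral_measure M E" "A \<in> sets M" "B \<in> sets M"
  shows "E A \<circ> E B = E B \<circ> E A"
  using assms unfolding spectral_measure_def by (metis Int_commute)

lemma representation_subset_spectral_instrument:
  assumes "spectral_measure M E"
  shows "range \<pi> \<subseteq> {spectral_instrument \<pi> E A a | A a. A \<in> sets M}"
proof -
  have "\<pi> a = spectral_instrument \<pi> E (space M) a" for a
    using assms unfolding spectral_measure_def spectral_instrument_def by simp
  then show ?thesis
    by blast
qed

lemma spectral_instrument_subset_if_trivial:
  assumes \<pi>: "unital_star_hom \<pi>"
    and trivial: "\<forall>A\<in>sets M. E A = (\<lambda>x. 0) \<or> E A = id"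
  shows "{spectral_instrument \<pi> E A a | A a. A \<in> sets M} \<subseteq> insert (\<lambda>x. 0) (range \<pi>)"
proof -
  have "\<pi> a 0 = 0" for a
    using \<pi> linear_simps(3) unfolding unital_star_hom_def bounded_clinear_def by blast
  then show ?thesis
    using trivial unfolding spectral_instrument_def by fastforce
qed

lemma spectral_measure_trivial_if_instrument_irreducible:
  assumes E: "spectral_measure M E"
    and commute: "\<forall>A\<in>sets M. \<forall>a. E A \<circ> \<pi> a = \<pi> a \<circ> E A"
    and irred: "irreducible_instrument M (spectral_instrument \<pi> E)"
  shows "\<forall>A\<in>sets M. E A = (\<lambda>x. 0) \<or> E A = id"
proof
  fix A assume A: "A \<in> sets M"
  have "E A \<circ> T = T \<circ> E A" if "T \<in> {spectral_instrument \<pi> E B a | B a. B \<in> sets M}" for T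
  proof -
    from that obtain B a where B: "B \<in> sets M" and T: "T = \<pi> a \<circ> E B"
      unfolding spectral_instrument_def by blast
    have "E A \<circ> (\<pi> a \<circ> E B) = \<pi> a \<circ> (E A \<circ> E B)"
      using commute A by (simp add: comp_assoc[symmetric])
    also have "\<dots> = \<pi> a \<circ> E B \<circ> E A"
      unfolding spectral_measure_commute[OF E A B] by (simp add: comp_assoc)
    finally show ?thesis
      unfolding T .
  qed
  moreover have "is_projection (E A)"
    using E A unfolding spectral_measure_def by blast
  ultimately show "E A = (\<lambda>x. 0) \<or> E A = id"
    using irred irreducible_family_commuting_projection
    unfolding irreducible_instrument_def by blast
qed

theorem proposition2p14:
  fixes M :: "'x measure"
    and \<pi> :: "'a::cstar_algebra_1 \<Rightarrow> ('h::chilbert \<Rightarrow> 'h)"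
    and E :: "'x set \<Rightarrow> ('h \<Rightarrow> 'h)"
  assumes "unital_star_hom \<pi>"
    and "spectral_measure M E"
    and "\<forall>A\<in>sets M. \<forall>a. E A \<circ> \<pi> a = \<pi> a \<circ> E A"
  shows "(irreducible_instrument M (spectral_instrument \<pi> E) \<longleftrightarrow> irreducible_representation \<pi>)
    \<and> (irreducible_representation \<pi> \<longrightarrow> (\<forall>A\<in>sets M. E A = (\<lambda>x. 0) \<or> E A = id))"
proof -
  have rep_to_instrument:
    "irreducible_representation \<pi> \<Longrightarrow> irreducible_instrument M (spectral_instrument \<pi> E)"
    unfolding irreducible_representation_def irreducible_instrument_def
    by (rule irreducible_family_mono[OF representation_subset_spectral_instrument[OF assms(2)]])
  have instrument_to_rep:
    "irreducible_instrument M (spectral_instrument \<pi> E) \<Longrightarrow> irreducible_representation \<pi>"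
  proof -
    assume irred: "irreducible_instrument M (spectral_instrument \<pi> E)"
    have "irreducible_family (insert (\<lambda>x. 0) (range \<pi>))"
      using irred irreducible_family_mono[OF spectral_instrument_subset_if_trivial[OF assms(1)
          spectral_measure_trivial_if_instrument_irreducible[OF assms(2,3) irred]]]
      unfolding irreducible_instrument_def by blast
    then show ?thesis
      unfolding irreducible_representation_def irreducible_family_insert_zero .
  qed
  show ?thesis
    using rep_to_instrument instrument_to_rep
      spectral_measure_trivial_if_instrument_irreducible[OF assms(2,3)] by blast
qed

end
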